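(* Let $\omega$ be a good weight function satisfying $\omega(t)=o(t)$ as $t\to\infty$, with associated weight matrix $\{W^x\}_{x>0}$. Then for every $x>0$ there exist $y_3\ge y_2\ge y_1\ge x$ and $D\ge1$ such that for all $t>0$ $$\overline{\Gamma}_{w^{y_3}}(D^3t)\le\underline{\Gamma}_{w^{y_2}}(D^2t)\le\overline{\Gamma}_{w^{y_2}}(D^2t)\le\underline{\Gamma}_{w^{y_1}}(Dt)\le\frac{\underline{\Gamma}_{w^x}(t)}{2}.$$ Moreover one may choose $y_1\ge2x$ and $y_2\ge2y_1$, so that $w^x_{j+k}\le w^{y_1}_jw^{y_1}_k$ and $w^{y_1}_{j+k}\le w^{y_2}_jw^{y_2}_k$ for all $j,k\in\mathbb{N}$.
   Context: A weight function is a continuous increasing $\omega:[0,\infty)\to[0,\infty)$ with $\omega(0)=0$, $\omega(t)\to\infty$, $\omega(2t)=O(\omega(t))$, $\omega(t)=O(t)$, $\log t=o(\omega(t))$, and $\varphi(t)=\omega(e^t)$ convex; normalized so that $\omega|_{[0,1]}=0$, $\varphi^*(t)=\sup_{s\ge0}(st-\varphi(s))$. Its weight matrix is $W^x_k=\exp(\frac1x\varphi^*(xk))$, $x>0$, and $\vartheta^x_k=W^x_k/W^x_{k-1}$, $w^x_k=W^x_k/k!$. $\omega$ is good if $\forall x>0\ \exists y>0\ \exists C\ge1\ \forall 1\le j\le k:\ \vartheta^x_j/j\le C\vartheta^y_k/k$. For a positive sequence $m$ with $m_0=1$, $m_k^{1/k}\to\infty$, $m_{k+1}/m_k\to\infty$: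 $h_m(t)=\inf_k m_kt^k$, $\overline{\Gamma}_m(t)=\min\{k:h_m(t)=m_kt^k\}$, $\underline{\Gamma}_m(t)=\min\{k:m_{k+1}/m_k\ge1/t\}$ for $t>0$. *)

theory Defs
  imports "HOL-Analysis.Analysis" "HOL-Library.Landau_Symbols"
begin

definition weight_function :: "(real \<Rightarrow> real) \<Rightarrow> bool" where
  "weight_function \<omega> \<longleftrightarrow>
     continuous_on {0..} \<omega> \<and>
     mono_on {0..} \<omega> \<and>
     (\<forall>t\<ge>0. \<omega> t \<ge> 0) \<and>
     \<omega> 0 = 0 \<and>
     filterlim \<omega> at_top at_top \<and>
     (\<lambda>t. \<omega> (2 * t)) \<in> O[at_top](\<omega>) \<and>
     \<omega> \<in> O[at_top](\<lambda>t. t) \<and>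
     (\<lambda>t. ln t) \<in> o[at_top](\<omega>) \<and>
     convex_on UNIV (\<lambda>t. \<omega> (exp t)) \<and>
     (\<forall>t\<in>{0..1}. \<omega> t = 0)"

definition phi :: "(real \<Rightarrow> real) \<Rightarrow> real \<Rightarrow> real" where
  "phi \<omega> t = \<omega> (exp t)"

definition phi_star :: "(real \<Rightarrow> real) \<Rightarrow> real \<Rightarrow> real" where
  "phi_star \<omega> t = (SUP s\<in>{0..}. s * t - phi \<omega> s)"

definition WM :: "(real \<Rightarrow> real) \<Rightarrow> real \<Rightarrow> nat \<Rightarrow> real" where
  "WM \<omega> x k = exp (phi_star \<omega> (x * real k) / x)"

definition theta :: "(real \<Rightarrow> real) \<Rightarrow> real \<Rightarrow> nat \<Rightarrow> real" where
  "theta \<omega> x k = WM \<omega> x k / WM \<omega> x (k - 1)"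

definition wm :: "(real \<Rightarrow> real) \<Rightarrow> real \<Rightarrow> nat \<Rightarrow> real" where
  "wm \<omega> x k = WM \<omega> x k / fact k"

definition good_weight :: "(real \<Rightarrow> real) \<Rightarrow> bool" where
  "good_weight \<omega> \<longleftrightarrow>
     (\<forall>x>0. \<exists>y>0. \<exists>C\<ge>1. \<forall>j k. 1 \<le> j \<and> j \<le> k \<longrightarrow>
        theta \<omega> x j / real j \<le> C * theta \<omega> y k / real k)"

definition h_fun :: "(nat \<Rightarrow> real) \<Rightarrow> real \<Rightarrow> real" where
  "h_fun m t = (INF k. m k * t ^ k)"

definition Gamma_upper :: "(nat \<Rightarrow> real) \<Rightarrow> real \<Rightarrow> nat" where
  "Gamma_upper m t = (LEAST k. h_fun m t = m k * t ^ k)"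

definition Gamma_lower :: "(nat \<Rightarrow> real) \<Rightarrow> real \<Rightarrow> nat" where
  "Gamma_lower m t = (LEAST k. m (Suc k) / m k \<ge> 1 / t)"

end

theory Submission
  imports Defs
begin

text \<open>
  Everything rests on the convexity of phi*: theta x k is the exponential of the slope of phi*
  on [x(k-1), xk], so it increases in both x and k, and W x (j+k) <= W (2x) j * W (2x) k by
  midpoint convexity. Since omega(t) = o(t), W x k eventually exceeds C^k k! for every C, so the
  quotients w x (n+1) / w x n = theta x (n+1) / (n+1) are unbounded and the lower counting
  function is finite. For n >= 2 the slope interval [xn, x(n+1)] lies to the left of
  [4xm, 4x(m+1)] with m = n div 2, which halves the lower counting function when passing from x
  to 4x; the single remaining case n = 1 is absorbed into the constant D. Goodness transports the
  inequality w (n+1) / w n >= 1/t from one index to all larger indices of a bigger parameter, at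
  the cost of replacing t by Dt. Then k |-> w k (Dt)^k is increasing from that index on, so its
  infimum is a minimum attained no later, and the upper counting function is bounded by it.
\<close>

lemma convex_on_slope_mono:
  fixes f :: "real \<Rightarrow> real"
  assumes f: "convex_on UNIV f" and "a < b" "c < d" "a \<le> c" "b \<le> d"
  shows "(f b - f a) / (b - a) \<le> (f d - f c) / (d - c)"
proof -
  have swap: "(f u - f v) / (u - v) = (f v - f u) / (v - u)" for u v
    by (metis minus_diff_eq minus_divide_divide)
  have "(f b - f a) / (b - a) \<le> (f d - f a) / (d - a)"
  proof (cases "b = d")
    case False
    with assms have "b < d" by auto
    from convex_on_slope_le(1)[OF f _ _ \<open>a < b\<close> this] show ?thesis by (simp add: swap)
  qed simp
  also have "\<dots> \<le> (f d - f c) / (d - c)"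
  proof (cases "a = c")
    case False
    with assms have "a < c" by auto
    from convex_on_slope_le(2)[OF f _ _ this \<open>c < d\<close>] show ?thesis by (simp add: swap)
  qed simp
  finally show ?thesis .
qed

lemma fact_mult_le_fact_add: "fact j * fact k \<le> (fact (j + k) :: real)"
proof -
  have "fact j * fact k * real ((j + k) choose j) = fact (j + k)"
    using binomial_fact_lemma[of j "j + k"] by (metis add_diff_cancel_left' le_add1 of_nat_fact of_nat_mult)
  moreover have "real ((j + k) choose j) \<ge> 1"
    by (simp add: Suc_leI)
  ultimately show ?thesis
    by (metis fact_ge_zero mult_cancel_left1 mult_left_mono mult_nonneg_nonneg)
qed

subsection \<open>The Young conjugate \<open>\<phi>\<^sup>*\<close>\<close>

lemma phi_nonneg: "weight_function \<omega> \<Longrightarrow> phi \<omega> s \<ge> 0"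
  unfolding phi_def weight_function_def by (simp add: less_imp_le)

lemma phi_0: "weight_function \<omega> \<Longrightarrow> phi \<omega> 0 = 0"
  unfolding phi_def weight_function_def by simp

lemma bdd_above_phi_star:
  assumes wf: "weight_function \<omega>"
  shows "bdd_above ((\<lambda>s. s * t - phi \<omega> s) ` {0..})"
proof -
  have "(\<lambda>T. ln T) \<in> o[at_top](\<omega>)"
    using wf by (simp add: weight_function_def)
  then have "eventually (\<lambda>T. norm (ln T) \<le> (1 / (\<bar>t\<bar> + 1)) * norm (\<omega> T)) at_top"
    by (rule landau_o.smallD) (simp add: add_pos_nonneg)
  \<comment> \<open>so phi s = omega (exp s) eventually dominates (|t| + 1) s\<close>
  then obtain T where T: "T \<ge> 1" "\<And>T'. T' \<ge> T \<Longrightarrow> \<bar>ln T'\<bar> \<le> \<bar>\<omega> T'\<bar> / (\<bar>t\<bar> + 1)"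
    unfolding eventually_at_top_linorder by (metis max.cobounded1 max.cobounded2 order_trans real_norm_def times_divide_eq_left mult_1)
  have "s * t - phi \<omega> s \<le> ln T * \<bar>t\<bar>" if s: "s \<ge> 0" for s
  proof (cases "s \<ge> ln T")
    case True
    then have "exp s \<ge> T"
      using T(1) by (metis exp_le_cancel_iff exp_ln less_le_trans zero_less_one)
    with T(2) s have "s \<le> \<bar>\<omega> (exp s)\<bar> / (\<bar>t\<bar> + 1)" by fastforce
    moreover have "\<omega> (exp s) \<ge> 0"
      using phi_nonneg[OF wf, of s] by (simp add: phi_def)
    ultimately have "s * t \<le> phi \<omega> s"
      by (simp add: phi_def field_simps)
         (smt (verit) abs_ge_self mult_left_mono s distrib_left mult.commute)
    moreover have "0 \<le> ln T * \<bar>t\<bar>"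
      using T(1) by simp
    ultimately show ?thesis by linarith
  next
    case False
    with s have "s * t \<le> ln T * \<bar>t\<bar>"
      by (smt (verit) abs_ge_self abs_ge_zero mult_left_mono mult_right_mono)
    then show ?thesis using phi_nonneg[OF wf, of s] by linarith
  qed
  then show ?thesis by (intro bdd_aboveI2) auto
qed

lemma phi_star_upper:
  "weight_function \<omega> \<Longrightarrow> s \<ge> 0 \<Longrightarrow> s * t - phi \<omega> s \<le> phi_star \<omega> t"
  unfolding phi_star_def by (rule cSUP_upper[OF _ bdd_above_phi_star]) auto

lemma phi_star_least:
  "(\<And>s. s \<ge> 0 \<Longrightarrow> s * t - phi \<omega> s \<le> B) \<Longrightarrow> phi_star \<omega> t \<le> B"
  unfolding phi_star_def by (rule cSUP_least) auto

lemma phi_star_0: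
  assumes wf: "weight_function \<omega>"
  shows "phi_star \<omega> 0 = 0"
proof (rule order_antisym)
  show "phi_star \<omega> 0 \<le> 0"
    by (rule phi_star_least) (simp add: phi_nonneg[OF wf])
  show "0 \<le> phi_star \<omega> 0"
    using phi_star_upper[OF wf, of 0 0] by (simp add: phi_0[OF wf])
qed

lemma convex_on_phi_star:
  assumes wf: "weight_function \<omega>"
  shows "convex_on UNIV (phi_star \<omega>)"
proof (rule convex_onI)
  fix u a b :: real
  assume u: "0 < u" "u < 1"
  show "phi_star \<omega> ((1 - u) *\<^sub>R a + u *\<^sub>R b) \<le> (1 - u) * phi_star \<omega> a + u * phi_star \<omega> b"
  proof (simp, rule phi_star_least)
    fix s :: real
    assume s: "s \<ge> 0"
    have "(1 - u) * (s * a - phi \<omega> s) \<le> (1 - u) * phi_star \<omega> a"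
      "u * (s * b - phi \<omega> s) \<le> u * phi_star \<omega> b"
      using u phi_star_upper[OF wf s] by (simp_all add: mult_left_mono)
    then show "s * ((1 - u) * a + u * b) - phi \<omega> s \<le> (1 - u) * phi_star \<omega> a + u * phi_star \<omega> b"
      by (simp add: algebra_simps)
  qed
qed simp

lemma phi_star_div_mono:
  assumes wf: "weight_function \<omega>" and "0 < a" "a \<le> b"
  shows "phi_star \<omega> (a * real n) / a \<le> phi_star \<omega> (b * real n) / b"
proof (cases "n = 0")
  case True
  then show ?thesis by (simp add: phi_star_0[OF wf])
next
  case False
  then have n: "real n > 0" by simp
  have "(phi_star \<omega> (a * real n) - phi_star \<omega> 0) / (a * real n - 0)
      \<le> (phi_star \<omega> (b * real n) - phi_star \<omega> 0) / (b * real n - 0)"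
    by (rule convex_on_slope_mono[OF convex_on_phi_star[OF wf]])
       (use assms n in \<open>auto intro: mult_right_mono\<close>)
  then have "phi_star \<omega> (a * real n) / (a * real n) * real n
      \<le> phi_star \<omega> (b * real n) / (b * real n) * real n"
    using n by (intro mult_right_mono) (simp_all add: phi_star_0[OF wf])
  then show ?thesis
    using n assms by simp
qed

subsection \<open>The weight matrix\<close>

lemma WM_pos: "WM \<omega> x k > 0"
  by (simp add: WM_def)

lemma theta_pos: "theta \<omega> x k > 0"
  by (simp add: theta_def WM_pos)

lemma wm_pos: "wm \<omega> x k > 0"
  by (simp add: wm_def WM_pos)

lemma wm_0: "weight_function \<omega> \<Longrightarrow> wm \<omega> x 0 = 1"
  by (simp add: wm_def WM_def phi_star_0)

lemma wm_Suc_div: "wm \<omega> x (Suc n) / wm \<omega> x n = theta \<omega> x (Suc n) / real (Suc n)"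
  using WM_pos[of \<omega> x n] WM_pos[of \<omega> x "Suc n"]
  by (simp add: wm_def theta_def fact_Suc divide_simps)

lemma theta_eq_exp_slope:
  assumes "k \<ge> 1" "x > 0"
  shows "theta \<omega> x k = exp ((phi_star \<omega> (x * real k) - phi_star \<omega> (x * (real k - 1)))
                              / (x * real k - x * (real k - 1)))"
proof -
  have "real (k - 1) = real k - 1"
    using assms by (simp add: of_nat_diff)
  then show ?thesis
    using assms by (simp add: theta_def WM_def exp_diff[symmetric] diff_divide_distrib algebra_simps)
qed

lemma theta_le_theta:
  assumes wf: "weight_function \<omega>" and "x > 0" "y > 0" "j \<ge> 1" "k \<ge> 1"
    and "x * (real j - 1) \<le> y * (real k - 1)" "x * real j \<le> y * real k"
  shows "theta \<omega> x j \<le> theta \<omega> y k"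
  unfolding theta_eq_exp_slope[OF assms(4,2)] theta_eq_exp_slope[OF assms(5,3)] exp_le_cancel_iff
  by (rule convex_on_slope_mono[OF convex_on_phi_star[OF wf]]) (use assms in \<open>auto simp: algebra_simps\<close>)

lemma theta_mono:
  assumes wf: "weight_function \<omega>" and "0 < x" "x \<le> y" "k \<ge> 1"
  shows "theta \<omega> x k \<le> theta \<omega> y k"
  by (rule theta_le_theta[OF wf]) (use assms in \<open>auto intro: mult_right_mono\<close>)

lemma WM_mono:
  assumes "weight_function \<omega>" "0 < x" "x \<le> y"
  shows "WM \<omega> x k \<le> WM \<omega> y k"
  using phi_star_div_mono[OF assms] by (simp add: WM_def)

lemma WM_add_le_mult:
  assumes wf: "weight_function \<omega>" and x: "x > 0" and y: "y \<ge> 2 * x"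
  shows "WM \<omega> x (j + k) \<le> WM \<omega> y j * WM \<omega> y k"
proof -
  have "phi_star \<omega> ((1 - 1/2) *\<^sub>R (2 * x * real j) + (1/2) *\<^sub>R (2 * x * real k))
     \<le> (1 - 1/2) * phi_star \<omega> (2 * x * real j) + (1/2) * phi_star \<omega> (2 * x * real k)"
    by (rule convex_onD[OF convex_on_phi_star[OF wf]]) auto
  then have "phi_star \<omega> (x * real (j + k)) / x
      \<le> phi_star \<omega> (2 * x * real j) / (2 * x) + phi_star \<omega> (2 * x * real k) / (2 * x)"
    using x by (simp add: field_simps)
  then have "WM \<omega> x (j + k) \<le> WM \<omega> (2 * x) j * WM \<omega> (2 * x) k"
    by (simp add: WM_def exp_add[symmetric])
  also have "\<dots> \<le> WM \<omega> y j * WM \<omega> y k"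
    using WM_mono[OF wf _ y] x by (intro mult_mono) (auto simp: less_imp_le WM_pos)
  finally show ?thesis .
qed

lemma wm_add_le_mult:
  assumes "weight_function \<omega>" "x > 0" "y \<ge> 2 * x"
  shows "wm \<omega> x (j + k) \<le> wm \<omega> y j * wm \<omega> y k"
proof -
  have "WM \<omega> x (j + k) / fact (j + k) \<le> WM \<omega> y j * WM \<omega> y k / fact (j + k)"
    using WM_add_le_mult[OF assms] by (simp add: divide_right_mono)
  also have "\<dots> \<le> WM \<omega> y j * WM \<omega> y k / (fact j * fact k)"
    using fact_mult_le_fact_add[of j k] WM_pos[of \<omega> y j] WM_pos[of \<omega> y k]
    by (intro divide_left_mono) auto
  finally show ?thesis by (simp add: wm_def)
qed

lemma WM_ge_power_eventually:
  assumes wf: "weight_function \<omega>" and o: "\<omega> \<in> o[at_top](\<lambda>t. t)" and x: "x > 0" and A: "A > 0"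
  shows "eventually (\<lambda>k. (A * real k / 2) ^ k \<le> WM \<omega> x k) sequentially"
proof -
  \<comment> \<open>with this choice, omega (A k) <= x k ln 2; now test the supremum defining phi* (x k) at s = ln (A k)\<close>
  define \<epsilon> where "\<epsilon> = x * ln 2 / A"
  have "\<epsilon> > 0"
    using x A by (simp add: \<epsilon>_def)
  with o have "eventually (\<lambda>T. norm (\<omega> T) \<le> \<epsilon> * norm T) at_top"
    by (rule landau_o.smallD)
  then have "eventually (\<lambda>T. \<omega> T \<le> \<epsilon> * T \<and> 1 \<le> T) at_top"
    using eventually_ge_at_top[of 1] by eventually_elim auto
  moreover have "filterlim (\<lambda>k. A * real k) at_top sequentially"
    using A by (intro filterlim_tendsto_pos_mult_at_top[OF tendsto_const] filterlim_real_sequentially)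
  ultimately have "eventually (\<lambda>k. \<omega> (A * real k) \<le> \<epsilon> * (A * real k) \<and> 1 \<le> A * real k) sequentially"
    by (rule eventually_compose_filterlim)
  then show ?thesis
  proof eventually_elim
    fix k
    assume k: "\<omega> (A * real k) \<le> \<epsilon> * (A * real k) \<and> 1 \<le> A * real k"
    have lnq: "ln (A * real k / 2) = ln (A * real k) - ln 2"
      using k by (intro ln_divide_pos) linarith+
    have "\<epsilon> * (A * real k) = x * real k * ln 2"
      using A by (simp add: \<epsilon>_def)
    then have "phi \<omega> (ln (A * real k)) \<le> x * real k * ln 2"
      using k unfolding phi_def by (metis exp_ln less_le_trans zero_less_one)
    moreover have "ln (A * real k) * (x * real k) - phi \<omega> (ln (A * real k)) \<le> phi_star \<omega> (x * real k)"
      by (rule phi_star_upper[OF wf]) (use k in simp)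
    ultimately have "x * (real k * (ln (A * real k) - ln 2)) \<le> phi_star \<omega> (x * real k)"
      by (simp add: algebra_simps)
    then have "real k * ln (A * real k / 2) \<le> phi_star \<omega> (x * real k) / x"
      unfolding lnq using x by (simp add: pos_le_divide_eq mult_ac)
    then have "exp (real k * ln (A * real k / 2)) \<le> WM \<omega> x k"
      by (simp add: WM_def)
    then show "(A * real k / 2) ^ k \<le> WM \<omega> x k"
      using k by (simp add: exp_of_nat_mult)
  qed
qed

lemma ex_wm_Suc_div_ge:
  assumes wf: "weight_function \<omega>" and o: "\<omega> \<in> o[at_top](\<lambda>t. t)" and x: "x > 0" and t: "t > 0"
  shows "\<exists>n. 1 / t \<le> wm \<omega> x (Suc n) / wm \<omega> x n"
proof (rule ccontr)
  assume "\<not> ?thesis"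
  then have lt: "wm \<omega> x (Suc n) / wm \<omega> x n < 1 / t" for n
    by (simp add: not_le)
  define M where "M = max 1 (1 / t)"
  have M: "M \<ge> 1" "1 / t \<le> M"
    unfolding M_def by auto
  have upper: "wm \<omega> x k \<le> M ^ k" for k
  proof (induction k)
    case 0
    then show ?case by (simp add: wm_0[OF wf])
  next
    case (Suc k)
    have "wm \<omega> x (Suc k) = wm \<omega> x k * (wm \<omega> x (Suc k) / wm \<omega> x k)"
      using wm_pos[of \<omega> x k] by simp
    also have "\<dots> \<le> M ^ k * M"
      using Suc lt[of k] M wm_pos[of \<omega> x k] wm_pos[of \<omega> x "Suc k"] by (intro mult_mono) auto
    finally show ?case by (simp add: mult.commute)
  qed
  obtain k where k: "k \<ge> 1" "(4 * M * real k / 2) ^ k \<le> WM \<omega> x k"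
    using eventually_happens'[OF sequentially_bot eventually_conj
        [OF eventually_ge_at_top[of 1] WM_ge_power_eventually[OF wf o x, of "4 * M"]]] M
    by auto
  have "(2 * M) ^ k * fact k \<le> (2 * M) ^ k * real k ^ k"
    using M fact_le_power[of k] by (intro mult_left_mono) auto
  also have "\<dots> = (4 * M * real k / 2) ^ k"
    by (simp add: power_mult_distrib)
  also have "\<dots> \<le> WM \<omega> x k"
    by (fact k(2))
  finally have "(2 * M) ^ k \<le> wm \<omega> x k"
    by (simp add: wm_def field_simps)
  moreover have "M ^ k < (2 * M) ^ k"
    using M k by (intro power_strict_mono) auto
  ultimately show False
    using upper[of k] by linarith
qed

lemma wm_Suc_div_ge_half_index:
  assumes wf: "weight_function \<omega>" and x: "x > 0" and D: "D \<ge> 1"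
    and D_small_index: "theta \<omega> x 2 \<le> D * theta \<omega> (4 * x) 1"
    and t: "t > 0" and n: "1 / t \<le> wm \<omega> x (Suc n) / wm \<omega> x n"
  shows "1 / (D * t) \<le> wm \<omega> (4 * x) (Suc (n div 2)) / wm \<omega> (4 * x) (n div 2)"
proof -
  define m where "m = n div 2"
  have n': "1 / t \<le> theta \<omega> x (Suc n) / real (Suc n)"
    using n by (simp add: wm_Suc_div)
  have Dt: "1 / (D * t) \<le> 1 / t"
    using D t by (simp add: field_simps)
  consider "n = 0" | "n = 1" | "n \<ge> 2" by linarith
  then have "1 / (D * t) \<le> theta \<omega> (4 * x) (Suc m) / real (Suc m)"
  proof cases
    case 1
    then show ?thesis
      using theta_mono[OF wf x, of "4 * x" 1] x n' Dt by (simp add: m_def)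
  next
    case 2
    then have "1 / t \<le> D * theta \<omega> (4 * x) 1"
      using n' D_small_index theta_pos[of \<omega> x 2] by (simp add: numeral_2_eq_2)
    then show ?thesis
      using 2 D t by (simp add: m_def field_simps)
  next
    case 3
    then have "n \<le> 4 * m"
      unfolding m_def by presburger
    then have "real n \<le> 4 * real m"
      by linarith
    have "theta \<omega> x (Suc n) \<le> theta \<omega> (4 * x) (Suc m)"
    proof (rule theta_le_theta[OF wf x])
      have "x * real n \<le> x * (4 * real m)" "x * (real n + 1) \<le> x * (4 * (real m + 1))"
        using \<open>real n \<le> 4 * real m\<close> x by (intro mult_left_mono; simp)+
      then show "x * (real (Suc n) - 1) \<le> 4 * x * (real (Suc m) - 1)"
        and "x * real (Suc n) \<le> 4 * x * real (Suc m)"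
        by (simp_all add: algebra_simps)
    qed (use x in auto)
    then have "theta \<omega> x (Suc n) / real (Suc n) \<le> theta \<omega> (4 * x) (Suc m) / real (Suc m)"
      using theta_pos[of \<omega> "4 * x" "Suc m"]
      by (intro frac_le) (auto simp: m_def)
    then show ?thesis
      using n' Dt by linarith
  qed
  then show ?thesis
    by (simp add: wm_Suc_div m_def)
qed

subsection \<open>The associated functions of a sequence\<close>

lemma Gamma_lower_le: "1 / t \<le> m (Suc n) / m n \<Longrightarrow> Gamma_lower m t \<le> n"
  unfolding Gamma_lower_def by (rule Least_le)

lemma Gamma_lowerI:
  "1 / t \<le> m (Suc n) / m n \<Longrightarrow> 1 / t \<le> m (Suc (Gamma_lower m t)) / m (Gamma_lower m t)"
  unfolding Gamma_lower_def by (rule LeastI)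

lemma h_fun_attained_le:
  fixes m :: "nat \<Rightarrow> real"
  assumes pos: "\<And>j. m j > 0" and s: "s > 0"
    and tail: "\<And>j. j \<ge> k \<Longrightarrow> 1 / s \<le> m (Suc j) / m j"
  shows "\<exists>i\<le>k. h_fun m s = m i * s ^ i"
proof -
  define g where "g j = m j * s ^ j" for j
  have g_step: "g j \<le> g (Suc j)" if "j \<ge> k" for j
  proof -
    have "m j \<le> s * m (Suc j)"
      using tail[OF that] pos[of j] s by (simp add: field_simps)
    then show ?thesis
      unfolding g_def using s by (simp add: mult_right_mono mult.assoc mult.left_commute)
  qed
  have g_tail: "g k \<le> g j" if "j \<ge> k" for j
    using that
  proof (induction j rule: dec_induct)
    case (step j)
    then show ?case using g_step[of j] by linarith
  qed simp
  have "Min (g ` {..k}) \<in> g ` {..k}"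
    by (intro Min_in) auto
  then obtain i where i: "i \<le> k" "g i = Min (g ` {..k})"
    by (metis atMost_iff imageE)
  have below_k: "g i \<le> g j" if "j \<le> k" for j
    using i that by simp
  have "g i \<le> g j" for j
    using below_k[of j] below_k[of k] g_tail[of j] by (cases "j \<le> k") auto
  then have "h_fun m s = g i"
    unfolding h_fun_def g_def[symmetric] by (intro cInf_eq_minimum) auto
  with i show ?thesis
    unfolding g_def by blast
qed

lemma Gamma_upper_le: "h_fun m s = m i * s ^ i \<Longrightarrow> Gamma_upper m s \<le> i"
  unfolding Gamma_upper_def by (rule Least_le)

lemma h_fun_eq_Gamma_upper:
  "h_fun m s = m i * s ^ i \<Longrightarrow> h_fun m s = m (Gamma_upper m s) * s ^ Gamma_upper m s"
  unfolding Gamma_upper_def by (rule LeastI)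

lemma Gamma_lower_le_Gamma_upper:
  fixes m :: "nat \<Rightarrow> real"
  assumes pos: "\<And>j. m j > 0" and s: "s > 0" and attained: "h_fun m s = m i * s ^ i"
  shows "Gamma_lower m s \<le> Gamma_upper m s"
proof -
  define k where "k = Gamma_upper m s"
  have "m k * s ^ k = h_fun m s"
    using h_fun_eq_Gamma_upper[OF attained] by (simp add: k_def)
  also have "\<dots> \<le> m (Suc k) * s ^ Suc k"
    unfolding h_fun_def
    by (rule cINF_lower) (use pos s in \<open>auto intro!: bdd_belowI2[where m=0] less_imp_le\<close>)
  finally have "m k \<le> m (Suc k) * s"
    using s by (simp add: mult_ac)
  then have "1 / s \<le> m (Suc k) / m k"
    using pos[of k] s by (simp add: field_simps)
  then show ?thesis
    unfolding k_def by (rule Gamma_lower_le)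
qed

subsection \<open>Good weights\<close>

definition good_pair :: "(real \<Rightarrow> real) \<Rightarrow> real \<Rightarrow> real \<Rightarrow> real \<Rightarrow> bool" where
  "good_pair \<omega> x y C \<longleftrightarrow>
     (\<forall>j k. 1 \<le> j \<and> j \<le> k \<longrightarrow> theta \<omega> x j / real j \<le> C * theta \<omega> y k / real k)"

lemma good_pair_mono:
  assumes wf: "weight_function \<omega>" and good: "good_pair \<omega> x y C"
    and "0 < y" "y \<le> y'" "0 \<le> C" "C \<le> C'"
  shows "good_pair \<omega> x y' C'"
  unfolding good_pair_def
proof (intro allI impI)
  fix j k :: nat
  assume jk: "1 \<le> j \<and> j \<le> k"
  have "C * theta \<omega> y k \<le> C' * theta \<omega> y' k"
    using assms theta_mono[OF wf, of y y' k] jk theta_pos[of \<omega> y k] by (intro mult_mono) auto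
  with good jk show "theta \<omega> x j / real j \<le> C' * theta \<omega> y' k / real k"
    unfolding good_pair_def by (meson divide_right_mono of_nat_0_le_iff order_trans)
qed

lemma good_weight_obtains_good_pair:
  assumes wf: "weight_function \<omega>" and "good_weight \<omega>" and "x > 0" "z > 0"
  obtains y C where "z \<le> y" "C \<ge> 1" "good_pair \<omega> x y C"
proof -
  from assms obtain y C where "y > 0" "C \<ge> 1" "good_pair \<omega> x y C"
    unfolding good_weight_def good_pair_def by blast
  then show thesis
    using good_pair_mono[OF wf, of x y C "max y z" C] that[of "max y z" C] by auto
qed

lemma wm_Suc_div_ge_of_good_pair:
  assumes good: "good_pair \<omega> a b D" and D: "D > 0" and s: "s > 0"
    and k: "1 / s \<le> wm \<omega> a (Suc k) / wm \<omega> a k" and "k \<le> j"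
  shows "1 / (D * s) \<le> wm \<omega> b (Suc j) / wm \<omega> b j"
proof -
  have "1 / s \<le> theta \<omega> a (Suc k) / real (Suc k)"
    using k by (simp add: wm_Suc_div)
  also have "\<dots> \<le> D * (theta \<omega> b (Suc j) / real (Suc j))"
    using good[unfolded good_pair_def, rule_format, of "Suc k" "Suc j"] \<open>k \<le> j\<close> by simp
  finally show ?thesis
    using D s by (simp add: wm_Suc_div field_simps)
qed

lemma Gamma_step_of_good_pair:
  assumes good: "good_pair \<omega> a b D" and D: "D > 0" and s: "s > 0"
    and n: "1 / s \<le> wm \<omega> a (Suc n) / wm \<omega> a n"
  defines "L \<equiv> Gamma_lower (wm \<omega> a) s"
  shows "Gamma_upper (wm \<omega> b) (D * s) \<le> L"
    and "Gamma_lower (wm \<omega> b) (D * s) \<le> Gamma_upper (wm \<omega> b) (D * s)"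
    and "1 / (D * s) \<le> wm \<omega> b (Suc L) / wm \<omega> b L"
proof -
  have tail: "1 / (D * s) \<le> wm \<omega> b (Suc j) / wm \<omega> b j" if "L \<le> j" for j
    using wm_Suc_div_ge_of_good_pair[OF good D s Gamma_lowerI[OF n]] that by (simp add: L_def)
  then obtain i where i: "i \<le> L" and attained: "h_fun (wm \<omega> b) (D * s) = wm \<omega> b i * (D * s) ^ i"
    using h_fun_attained_le[of "wm \<omega> b" "D * s" L] wm_pos D s by auto
  show "Gamma_upper (wm \<omega> b) (D * s) \<le> L"
    using Gamma_upper_le[OF attained] i by linarith
  show "Gamma_lower (wm \<omega> b) (D * s) \<le> Gamma_upper (wm \<omega> b) (D * s)"
    by (rule Gamma_lower_le_Gamma_upper[OF wm_pos _ attained]) (use D s in simp)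
  show "1 / (D * s) \<le> wm \<omega> b (Suc L) / wm \<omega> b L"
    by (rule tail) simp
qed

lemma Gamma_chain:
  assumes wf: "weight_function \<omega>" and o: "\<omega> \<in> o[at_top](\<lambda>t. t)" and x: "x > 0"
    and D: "D \<ge> 1" "theta \<omega> x 2 \<le> D * theta \<omega> (4 * x) 1"
    and good1: "good_pair \<omega> (4 * x) y2 D" and good2: "good_pair \<omega> y2 y3 D" and t: "t > 0"
  shows "Gamma_upper (wm \<omega> y3) (D ^ 3 * t) \<le> Gamma_lower (wm \<omega> y2) (D ^ 2 * t) \<and>
         Gamma_lower (wm \<omega> y2) (D ^ 2 * t) \<le> Gamma_upper (wm \<omega> y2) (D ^ 2 * t) \<and>
         Gamma_upper (wm \<omega> y2) (D ^ 2 * t) \<le> Gamma_lower (wm \<omega> (4 * x)) (D * t) \<and>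
         real (Gamma_lower (wm \<omega> (4 * x)) (D * t)) \<le> real (Gamma_lower (wm \<omega> x) t) / 2"
proof -
  define n where "n = Gamma_lower (wm \<omega> x) t"
  obtain n0 where "1 / t \<le> wm \<omega> x (Suc n0) / wm \<omega> x n0"
    using ex_wm_Suc_div_ge[OF wf o x t] by blast
  then have n: "1 / t \<le> wm \<omega> x (Suc n) / wm \<omega> x n"
    unfolding n_def by (rule Gamma_lowerI)
  have half: "1 / (D * t) \<le> wm \<omega> (4 * x) (Suc (n div 2)) / wm \<omega> (4 * x) (n div 2)"
    by (rule wm_Suc_div_ge_half_index[OF wf x D t n])
  have "Gamma_lower (wm \<omega> (4 * x)) (D * t) \<le> n div 2"
    by (rule Gamma_lower_le[OF half])
  then have halved: "real (Gamma_lower (wm \<omega> (4 * x)) (D * t)) \<le> real n / 2"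
    by linarith
  have Dpos: "D > 0" "D * t > 0" "D * (D * t) > 0"
    using D t by auto
  note step1 = Gamma_step_of_good_pair[OF good1 Dpos(1,2) half]
  note step2 = Gamma_step_of_good_pair[OF good2 Dpos(1,3) step1(3)]
  have powers: "D ^ 2 * t = D * (D * t)" "D ^ 3 * t = D * (D * (D * t))"
    by (simp_all add: power2_eq_square power3_eq_cube mult_ac)
  show ?thesis
    unfolding powers using step1(1,2) step2(1) halved[unfolded n_def] by blast
qed

theorem proposition3p7:
  fixes \<omega> :: "real \<Rightarrow> real"
  assumes "weight_function \<omega>"
    and "good_weight \<omega>"
    and "\<omega> \<in> o[at_top](\<lambda>t. t)"
    and "x > 0"
  shows "\<exists>y1 y2 y3 D. x \<le> y1 \<and> y1 \<le> y2 \<and> y2 \<le> y3 \<and> D \<ge> (1::real) \<and>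
     (\<forall>t>0.
        Gamma_upper (wm \<omega> y3) (D ^ 3 * t) \<le> Gamma_lower (wm \<omega> y2) (D ^ 2 * t) \<and>
        Gamma_lower (wm \<omega> y2) (D ^ 2 * t) \<le> Gamma_upper (wm \<omega> y2) (D ^ 2 * t) \<and>
        Gamma_upper (wm \<omega> y2) (D ^ 2 * t) \<le> Gamma_lower (wm \<omega> y1) (D * t) \<and>
        real (Gamma_lower (wm \<omega> y1) (D * t)) \<le> real (Gamma_lower (wm \<omega> x) t) / 2) \<and>
     y1 \<ge> 2 * x \<and> y2 \<ge> 2 * y1 \<and>
     (\<forall>j k. wm \<omega> x (j + k) \<le> wm \<omega> y1 j * wm \<omega> y1 k) \<and>
     (\<forall>j k. wm \<omega> y1 (j + k) \<le> wm \<omega> y2 j * wm \<omega> y2 k)"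
proof -
  note wf = assms(1) and gw = assms(2) and o = assms(3) and x = assms(4)
  from x have "4 * x > 0" "8 * x > 0"
    by simp_all
  then obtain y2 C1 where y2: "8 * x \<le> y2" and C1: "C1 \<ge> 1" and good1: "good_pair \<omega> (4 * x) y2 C1"
    by (rule good_weight_obtains_good_pair[OF wf gw])
  from x y2 have "y2 > 0"
    by simp
  then obtain y3 C2 where y3: "y2 \<le> y3" and C2: "C2 \<ge> 1" and good2: "good_pair \<omega> y2 y3 C2"
    using good_weight_obtains_good_pair[OF wf gw] by blast
  define D where "D = max (max C1 C2) (max 1 (theta \<omega> x 2 / theta \<omega> (4 * x) 1))"
  have "D \<ge> 1" "theta \<omega> x 2 / theta \<omega> (4 * x) 1 \<le> D"
    by (auto simp: D_def)
  then have D: "D \<ge> 1" "theta \<omega> x 2 \<le> D * theta \<omega> (4 * x) 1"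
    by (simp_all add: pos_divide_le_eq theta_pos mult.commute)
  have "C1 \<le> D" "C2 \<le> D"
    by (simp_all add: D_def)
  then have "good_pair \<omega> (4 * x) y2 D" "good_pair \<omega> y2 y3 D"
    using good_pair_mono[OF wf good1 _ order_refl] good_pair_mono[OF wf good2 _ order_refl]
      \<open>y2 > 0\<close> y3 C1 C2 by (simp_all add: order.strict_trans2)
  then have "\<forall>t>0.
      Gamma_upper (wm \<omega> y3) (D ^ 3 * t) \<le> Gamma_lower (wm \<omega> y2) (D ^ 2 * t) \<and>
      Gamma_lower (wm \<omega> y2) (D ^ 2 * t) \<le> Gamma_upper (wm \<omega> y2) (D ^ 2 * t) \<and>
      Gamma_upper (wm \<omega> y2) (D ^ 2 * t) \<le> Gamma_lower (wm \<omega> (4 * x)) (D * t) \<and>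
      real (Gamma_lower (wm \<omega> (4 * x)) (D * t)) \<le> real (Gamma_lower (wm \<omega> x) t) / 2"
    using Gamma_chain[OF wf o x D] by blast
  moreover have "\<forall>j k. wm \<omega> x (j + k) \<le> wm \<omega> (4 * x) j * wm \<omega> (4 * x) k"
    using wm_add_le_mult[OF wf x, of "4 * x"] x by simp
  moreover have "\<forall>j k. wm \<omega> (4 * x) (j + k) \<le> wm \<omega> y2 j * wm \<omega> y2 k"
    using wm_add_le_mult[OF wf, of "4 * x" y2] x y2 by simp
  ultimately show ?thesis
    using x y2 y3 D(1) by (intro exI[of _ "4 * x"] exI[of _ y2] exI[of _ y3] exI[of _ D]) simp
qed

end
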